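(* Let $\Delta=\{\mathscr J_1,\dots,\mathscr J_m\}$ be any collection of subsets of $\{1,\dots,n\}$ and let $\mathcal K=\bigcap_i\mathscr J_i$. Suppose that $Q$ is a prime ideal of $R$ containing $I_\Delta+L_{\mathcal K}$. Then for each $\mathscr J_i$ there is some $\mathscr J_j$ such that $Q$ contains $L_{\mathscr J_i\cap\mathscr J_j}$.
   Context: $\mathbb K$ is a field, $R=\mathbb K[x_{i_1,\dots,i_n}:1\le i_j\le a_j]$, $A=(x_{i_1,\dots,i_n})$ the generic table. For a tuple $\sigma$ with $\sigma_j\in\{1,\dots,a_j\}\cup\{+\}$, $x_\sigma$ is the sum of all $x_{i_1,\dots,i_n}$ with $i_j=\sigma_j$ whenever $\sigma_j\ne+$. For $\mathscr J=\{j_1<\dots<j_m\}\subseteq\{1,\dots,n\}$ the margin $A_{\mathscr J}$ is the table whose $(i_1,\dots,i_m)$ entry is $x_\sigma$ with $\sigma_{j_r}=i_r$, $\sigma_j=+$ for $j\notin\mathscr J$; $L_{\mathscr J}$ is the ideal generated by the entries of $A_{\mathscr J}$. For a table $B$ with entries in $R$, $I(B)$ is the ideal generated by its generalized $2\times2$ minors $\det\begin{pmatrix} b_{i_1,\dots,i_m} & b_{j_1,\dots,j_{l-1},i_l,j_{l+1},\dots,j_m}\\ b_{i_1,\dots,i_{l-1},j_l,i_{l+1},\dots,i_m} & b_{j_1,\dots,j_m}\end{pmatrix}$, and $I_\Delta=\sum_{\mathscr J\in\Delta}I(A_{\mathscr J})$. *)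

theory Defs
  imports Main "HOL-Library.Poly_Mapping"
begin

text \<open>Cells of an n-way table with side lengths a 1, ..., a n. A cell (i_1,...,i_n) is
  encoded as a function i :: nat => nat with 1 <= i j <= a j for j in {1..n} and i j = 0
  for j outside {1..n}.\<close>
definition cells :: "(nat \<Rightarrow> nat) \<Rightarrow> nat \<Rightarrow> (nat \<Rightarrow> nat) set" where
  "cells a n = {i. (\<forall>j\<in>{1..n}. 1 \<le> i j \<and> i j \<le> a j) \<and> (\<forall>j. j \<notin> {1..n} \<longrightarrow> i j = 0)}"

type_synonym 'k tpoly = "((nat \<Rightarrow> nat) \<Rightarrow>\<^sub>0 nat) \<Rightarrow>\<^sub>0 'k"

definition var :: "(nat \<Rightarrow> nat) \<Rightarrow> 'k::comm_ring_1 tpoly" where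
  "var i = Poly_Mapping.single (Poly_Mapping.single i 1) 1"

text \<open>The ring R = K[x_i : i a cell], as a subset of all such polynomials.\<close>
definition ringR :: "(nat \<Rightarrow> nat) \<Rightarrow> nat \<Rightarrow> 'k::comm_ring_1 tpoly set" where
  "ringR a n = {p. \<forall>m\<in>Poly_Mapping.keys p. Poly_Mapping.keys m \<subseteq> cells a n}"

definition is_ideal_in :: "'k::comm_ring_1 tpoly set \<Rightarrow> 'k tpoly set \<Rightarrow> bool" where
  "is_ideal_in R I \<longleftrightarrow> I \<subseteq> R \<and> 0 \<in> I \<and> (\<forall>x\<in>I. \<forall>y\<in>I. x + y \<in> I)
     \<and> (\<forall>r\<in>R. \<forall>x\<in>I. r * x \<in> I)"

definition is_prime_ideal_in :: "'k::comm_ring_1 tpoly set \<Rightarrow> 'k tpoly set \<Rightarrow> bool" where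
  "is_prime_ideal_in R Q \<longleftrightarrow> is_ideal_in R Q \<and> Q \<noteq> R
     \<and> (\<forall>x\<in>R. \<forall>y\<in>R. x * y \<in> Q \<longrightarrow> x \<in> Q \<or> y \<in> Q)"

definition ideal_gen :: "'k::comm_ring_1 tpoly set \<Rightarrow> 'k tpoly set \<Rightarrow> 'k tpoly set" where
  "ideal_gen R S = {\<Sum>s\<in>F. c s * s | F c. finite F \<and> F \<subseteq> S \<and> (\<forall>s\<in>F. c s \<in> R)}"

text \<open>Valid indices of the margin table A_J: functions u with 1 <= u j <= a j for j in J
  (values outside J are irrelevant).\<close>
definition marg_index :: "(nat \<Rightarrow> nat) \<Rightarrow> nat set \<Rightarrow> (nat \<Rightarrow> nat) set" where
  "marg_index a J = {u. \<forall>j\<in>J. 1 \<le> u j \<and> u j \<le> a j}"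

text \<open>Entry of the margin A_J at index u: x_sigma with sigma_j = u j for j in J and + otherwise.\<close>
definition marg :: "(nat \<Rightarrow> nat) \<Rightarrow> nat \<Rightarrow> nat set \<Rightarrow> (nat \<Rightarrow> nat) \<Rightarrow> 'k::comm_ring_1 tpoly" where
  "marg a n J u = (\<Sum>i\<in>{i\<in>cells a n. \<forall>j\<in>J. i j = u j}. var i)"

definition L_ideal :: "(nat \<Rightarrow> nat) \<Rightarrow> nat \<Rightarrow> nat set \<Rightarrow> 'k::comm_ring_1 tpoly set" where
  "L_ideal a n J = ideal_gen (ringR a n) {marg a n J u | u. u \<in> marg_index a J}"

definition minors :: "(nat \<Rightarrow> nat) \<Rightarrow> nat \<Rightarrow> nat set \<Rightarrow> 'k::comm_ring_1 tpoly set" where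
  "minors a n J = {marg a n J u * marg a n J v - marg a n J (v(l := u l)) * marg a n J (u(l := v l))
     | u v l. u \<in> marg_index a J \<and> v \<in> marg_index a J \<and> l \<in> J}"

definition I_Delta :: "(nat \<Rightarrow> nat) \<Rightarrow> nat \<Rightarrow> nat set set \<Rightarrow> 'k::comm_ring_1 tpoly set" where
  "I_Delta a n \<Delta> = ideal_gen (ringR a n) (\<Union>J\<in>\<Delta>. minors a n J)"

end

theory Submission
  imports Defs
begin

text \<open>Fix S \<subseteq> J and l \<in> J - S and expand the margin entries x_{S \<union> {l}}(w) and
  x_{J - {l}}(v) as sums of entries x_J(u), x_J(u') of A_J. Modulo I(A_J) every product
  x_J(u) x_J(u') may be replaced by x_J(v') x_J(u(l := u' l)), where v' = v(l := w l) does not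
  depend on the pair, and (u, u') \<mapsto> u(l := u' l) is a bijection onto the cells refining x_S(w).
  Hence x_{S \<union> {l}}(w) x_{J - {l}}(v) \<equiv> x_J(v') x_S(w) modulo I(A_J), so a prime Q containing
  I(A_J) and L_S contains L_{S \<union> {l}} or L_{J - {l}}. Enlarging S = K one element at a time,
  either L_J \<subseteq> Q or L_{J - {l}} \<subseteq> Q for some l \<in> J - K. Such an l lies outside some J' \<in> \<Delta>,
  and then L_{J \<inter> J'} \<subseteq> Q, because margins over a smaller index set are sums of margins over a
  larger one.\<close>

lemma ringR_zero: "0 \<in> ringR a n"
  by (simp add: ringR_def)

lemma ringR_one: "(1 :: 'k::comm_ring_1 tpoly) \<in> ringR a n"
  by (cases "(1::'k tpoly) = 0") (auto simp: ringR_def)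

lemma ringR_add: "p \<in> ringR a n \<Longrightarrow> q \<in> ringR a n \<Longrightarrow> p + q \<in> ringR a n"
  unfolding ringR_def using keys_add[of p q] by blast

lemma ringR_sum: "(\<And>x. x \<in> F \<Longrightarrow> f x \<in> ringR a n) \<Longrightarrow> sum f F \<in> ringR a n"
  by (induction F rule: infinite_finite_induct) (auto simp: ringR_zero ringR_add)

lemma ringR_var: "i \<in> cells a n \<Longrightarrow> (var i :: 'k::comm_ring_1 tpoly) \<in> ringR a n"
  by (cases "(1::'k) = 0") (auto simp: ringR_def var_def)

lemma ringR_marg: "marg a n J u \<in> ringR a n"
  unfolding marg_def by (rule ringR_sum) (auto intro: ringR_var)

lemma ideal_in_sum: "is_ideal_in R I \<Longrightarrow> (\<And>x. x \<in> F \<Longrightarrow> f x \<in> I) \<Longrightarrow> sum f F \<in> I"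
  by (induction F rule: infinite_finite_induct) (auto simp: is_ideal_in_def)

lemma ideal_gen_subset_iff:
  assumes I: "is_ideal_in R I" and "1 \<in> R"
  shows "ideal_gen R S \<subseteq> I \<longleftrightarrow> S \<subseteq> I"
proof
  have "s \<in> ideal_gen R S" if "s \<in> S" for s
    unfolding ideal_gen_def using that \<open>1 \<in> R\<close>
    by (intro CollectI exI[of _ "{s}"] exI[of _ "\<lambda>_. 1"]) simp
  then show "ideal_gen R S \<subseteq> I \<Longrightarrow> S \<subseteq> I" by blast
next
  assume "S \<subseteq> I"
  show "ideal_gen R S \<subseteq> I"
  proof
    fix x assume "x \<in> ideal_gen R S"
    then obtain F c where x: "x = (\<Sum>s\<in>F. c s * s)" and "F \<subseteq> S" and "\<forall>s\<in>F. c s \<in> R"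
      unfolding ideal_gen_def by blast
    have "c s * s \<in> I" if "s \<in> F" for s
      using that I \<open>F \<subseteq> S\<close> \<open>S \<subseteq> I\<close> \<open>\<forall>s\<in>F. c s \<in> R\<close> unfolding is_ideal_in_def by blast
    then show "x \<in> I" unfolding x by (rule ideal_in_sum[OF I])
  qed
qed

lemma L_ideal_subset_iff:
  assumes "is_ideal_in (ringR a n) I"
  shows "L_ideal a n J \<subseteq> I \<longleftrightarrow> (\<forall>u\<in>marg_index a J. marg a n J u \<in> I)"
  unfolding L_ideal_def ideal_gen_subset_iff[OF assms ringR_one] by blast

definition cells_on :: "(nat \<Rightarrow> nat) \<Rightarrow> nat set \<Rightarrow> (nat \<Rightarrow> nat) set" where
  "cells_on a J = {u. (\<forall>j\<in>J. 1 \<le> u j \<and> u j \<le> a j) \<and> (\<forall>j. j \<notin> J \<longrightarrow> u j = 0)}"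

lemma finite_cells_on:
  assumes "finite J"
  shows "finite (cells_on a J)"
proof (rule finite_subset)
  show "cells_on a J \<subseteq> {f. \<forall>x. (x \<in> J \<longrightarrow> f x \<in> (\<Union>j\<in>J. {..a j})) \<and> (x \<notin> J \<longrightarrow> f x = 0)}"
    unfolding cells_on_def by auto
  show "finite {f. \<forall>x. (x \<in> J \<longrightarrow> f x \<in> (\<Union>j\<in>J. {..a j})) \<and> (x \<notin> J \<longrightarrow> f x = (0::nat))}"
    by (rule finite_set_of_finite_funs) (use assms in auto)
qed

lemma cells_eq_cells_on: "cells a n = cells_on a {1..n}"
  unfolding cells_def cells_on_def by auto

lemma cells_on_subset_marg_index: "cells_on a J \<subseteq> marg_index a J"
  unfolding cells_on_def marg_index_def by auto

lemma marg_cong: "\<forall>j\<in>J. u j = u' j \<Longrightarrow> marg a n J u = marg a n J u'"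
  unfolding marg_def by simp

lemma marg_eq_sum_marg:
  assumes "S \<subseteq> J" "J \<subseteq> {1..n}"
  shows "marg a n S w = (\<Sum>u\<in>{u\<in>cells_on a J. \<forall>j\<in>S. u j = w j}. (marg a n J u :: 'k::comm_ring_1 tpoly))"
proof -
  let ?C = "{i\<in>cells a n. \<forall>j\<in>S. i j = w j}"
  let ?B = "{u\<in>cells_on a J. \<forall>j\<in>S. u j = w j}"
  let ?restrict = "\<lambda>i j. if j \<in> J then i j else 0"
  have "finite J" using assms(2) finite_subset by blast
  have "finite ?C" using finite_cells_on[of "{1..n}" a] by (simp add: cells_eq_cells_on)
  moreover have "finite ?B" using finite_cells_on[OF \<open>finite J\<close>, of a] by simp
  moreover have "?restrict ` ?C \<subseteq> ?B" using assms unfolding cells_def cells_on_def by auto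
  ultimately have "marg a n S w = (\<Sum>u\<in>?B. \<Sum>i\<in>{i\<in>?C. ?restrict i = u}. (var i :: 'k tpoly))"
    unfolding marg_def by (rule sum.group[symmetric])
  also have "\<dots> = (\<Sum>u\<in>?B. marg a n J u)"
  proof (rule sum.cong[OF refl])
    fix u assume u: "u \<in> ?B"
    have "{i\<in>?C. ?restrict i = u} = {i\<in>cells a n. \<forall>j\<in>J. i j = u j}"
    proof (intro set_eqI iffI)
      fix i assume i: "i \<in> {i\<in>?C. ?restrict i = u}"
      then have "\<forall>j\<in>J. i j = u j" by auto
      then show "i \<in> {i\<in>cells a n. \<forall>j\<in>J. i j = u j}" using i by blast
    next
      fix i assume i: "i \<in> {i\<in>cells a n. \<forall>j\<in>J. i j = u j}"
      then have "?restrict i = u" using u unfolding cells_on_def by (auto simp: fun_eq_iff)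
      moreover have "\<forall>j\<in>S. i j = w j" using i u \<open>S \<subseteq> J\<close> by (simp add: subset_iff)
      ultimately show "i \<in> {i\<in>?C. ?restrict i = u}" using i by blast
    qed
    then show "(\<Sum>i\<in>{i\<in>?C. ?restrict i = u}. var i) = marg a n J u" by (simp add: marg_def)
  qed
  finally show ?thesis .
qed

lemma L_ideal_subset_mono:
  assumes I: "is_ideal_in (ringR a n) I" and "S \<subseteq> J" "J \<subseteq> {1..n}"
    and LJ: "L_ideal a n J \<subseteq> I"
  shows "L_ideal a n S \<subseteq> I"
  unfolding L_ideal_subset_iff[OF I]
proof
  fix w assume "w \<in> marg_index a S"
  have "(\<Sum>u\<in>{u\<in>cells_on a J. \<forall>j\<in>S. u j = w j}. marg a n J u) \<in> I"
    using LJ cells_on_subset_marg_index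
    by (intro ideal_in_sum[OF I]) (auto simp: L_ideal_subset_iff[OF I])
  then show "marg a n S w \<in> I" by (simp only: marg_eq_sum_marg[OF \<open>S \<subseteq> J\<close> \<open>J \<subseteq> {1..n}\<close>])
qed

lemma bij_betw_swap_cells_on:
  assumes "S \<subseteq> J" "l \<in> J" "l \<notin> S"
    and "w \<in> marg_index a (insert l S)" and "v \<in> marg_index a (J - {l})"
  shows "bij_betw (\<lambda>(u, u'). u(l := u' l))
     ({u\<in>cells_on a J. \<forall>j\<in>insert l S. u j = w j} \<times> {u\<in>cells_on a J. \<forall>j\<in>J - {l}. u j = v j})
     {u\<in>cells_on a J. \<forall>j\<in>S. u j = w j}" (is "bij_betw ?swap (?A \<times> ?B) ?C")
proof (rule bij_betw_byWitness)
  define unswap where "unswap = (\<lambda>u. (u(l := w l), (\<lambda>j. if j \<in> J - {l} then v j else 0)(l := u l)))"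
  have "unswap (u(l := u' l)) = (u, u')" if "u \<in> ?A" "u' \<in> ?B" for u u'
    using that unfolding unswap_def cells_on_def by (auto simp: fun_eq_iff)
  then show "\<forall>p\<in>?A \<times> ?B. unswap (?swap p) = p" by auto
  show "\<forall>u\<in>?C. ?swap (unswap u) = u"
    by (simp add: unswap_def)
  show "?swap ` (?A \<times> ?B) \<subseteq> ?C"
    using assms unfolding cells_on_def by auto
  show "unswap ` ?C \<subseteq> ?A \<times> ?B"
    using assms unfolding cells_on_def marg_index_def unswap_def by (auto split: if_splits)
qed

lemma marg_insert_mult_marg_Diff:
  fixes I :: "'k::comm_ring_1 tpoly set"
  assumes I: "is_ideal_in (ringR a n) I" and minors_I: "minors a n J \<subseteq> I"
    and "J \<subseteq> {1..n}" "S \<subseteq> J" "l \<in> J" "l \<notin> S"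
    and "w \<in> marg_index a (insert l S)" and "v \<in> marg_index a (J - {l})"
  shows "\<exists>m\<in>I. marg a n (insert l S) w * marg a n (J - {l}) v
                = m + marg a n J (v(l := w l)) * marg a n S w"
proof -
  define b where "b = (marg a n J :: _ \<Rightarrow> 'k tpoly)"
  define A where "A = {u\<in>cells_on a J. \<forall>j\<in>insert l S. u j = w j}"
  define B where "B = {u\<in>cells_on a J. \<forall>j\<in>J - {l}. u j = v j}"
  define C where "C = {u\<in>cells_on a J. \<forall>j\<in>S. u j = w j}"
  define swap where "swap = (\<lambda>(u, u'). u(l := u' l :: nat))"
  define minor where "minor = (\<lambda>(u, u'). b u * b u' - b (u'(l := u l)) * b (u(l := u' l)))"
  have "finite (cells_on a J)"
    using finite_cells_on \<open>J \<subseteq> {1..n}\<close> finite_subset by blast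
  then have "finite A" "finite B" unfolding A_def B_def by simp_all
  have bij: "bij_betw swap (A \<times> B) C"
    unfolding swap_def A_def B_def C_def using bij_betw_swap_cells_on assms(4-) .
  have swapped: "b (u'(l := u l)) = b (v(l := w l))" if "(u, u') \<in> A \<times> B" for u u'
    using that unfolding b_def A_def B_def by (intro marg_cong) auto
  have "marg a n (insert l S) w = sum b A"
    unfolding A_def b_def by (rule marg_eq_sum_marg) (use assms(3-6) in auto)
  moreover have "marg a n (J - {l}) v = sum b B"
    unfolding B_def b_def by (rule marg_eq_sum_marg) (use assms(3) in auto)
  ultimately have "marg a n (insert l S) w * marg a n (J - {l}) v = sum b A * sum b B"
    by simp
  also have "\<dots> = (\<Sum>(u, u')\<in>A \<times> B. b u * b u')"
    by (simp add: sum_product sum.cartesian_product)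
  also have "\<dots> = (\<Sum>p\<in>A \<times> B. minor p + b (v(l := w l)) * b (swap p))"
    by (rule sum.cong[OF refl]) (auto simp: minor_def swap_def swapped)
  also have "\<dots> = sum minor (A \<times> B) + b (v(l := w l)) * sum b C"
    using sum.reindex_bij_betw[OF bij, of b] by (simp add: sum.distrib flip: sum_distrib_left)
  also have "sum b C = marg a n S w"
    unfolding C_def b_def by (rule marg_eq_sum_marg[symmetric]) (use assms(3,4) in auto)
  finally have "marg a n (insert l S) w * marg a n (J - {l}) v
                  = sum minor (A \<times> B) + marg a n J (v(l := w l)) * marg a n S w"
    by (simp only: b_def)
  moreover have "sum minor (A \<times> B) \<in> I"
  proof (rule ideal_in_sum[OF I])
    fix p assume "p \<in> A \<times> B"
    then have "fst p \<in> marg_index a J" "snd p \<in> marg_index a J"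
      using cells_on_subset_marg_index[of a J] unfolding A_def B_def by auto
    then have "minor p \<in> minors a n J"
      unfolding minor_def b_def minors_def using \<open>l \<in> J\<close> by (auto simp: case_prod_beta)
    then show "minor p \<in> I" using minors_I by blast
  qed
  ultimately show ?thesis by blast
qed

lemma L_ideal_insert_subset_or_L_ideal_Diff_subset:
  fixes Q :: "'k::comm_ring_1 tpoly set"
  assumes Q: "is_prime_ideal_in (ringR a n) Q" and minors_Q: "minors a n J \<subseteq> Q"
    and "J \<subseteq> {1..n}" "S \<subseteq> J" "l \<in> J" "l \<notin> S" and LS: "L_ideal a n S \<subseteq> Q"
  shows "L_ideal a n (insert l S) \<subseteq> Q \<or> L_ideal a n (J - {l}) \<subseteq> Q"
proof (rule disjCI)
  have I: "is_ideal_in (ringR a n) Q" using Q by (simp add: is_prime_ideal_in_def)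
  assume "\<not> L_ideal a n (J - {l}) \<subseteq> Q"
  then obtain v where v: "v \<in> marg_index a (J - {l})" and "marg a n (J - {l}) v \<notin> Q"
    unfolding L_ideal_subset_iff[OF I] by blast
  show "L_ideal a n (insert l S) \<subseteq> Q"
    unfolding L_ideal_subset_iff[OF I]
  proof
    fix w assume w: "w \<in> marg_index a (insert l S)"
    obtain m where "m \<in> Q"
      and eq: "marg a n (insert l S) w * marg a n (J - {l}) v = m + marg a n J (v(l := w l)) * marg a n S w"
      using marg_insert_mult_marg_Diff[OF I minors_Q assms(3-6) w v] by blast
    have "marg a n S w \<in> Q"
      using w LS unfolding L_ideal_subset_iff[OF I] marg_index_def by auto
    then have "marg a n (insert l S) w * marg a n (J - {l}) v \<in> Q"
      using eq \<open>m \<in> Q\<close> I ringR_marg unfolding is_ideal_in_def by metis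
    then show "marg a n (insert l S) w \<in> Q"
      using Q \<open>marg a n (J - {l}) v \<notin> Q\<close> ringR_marg unfolding is_prime_ideal_in_def by blast
  qed
qed

lemma L_ideal_subset_or_L_ideal_Diff_subset:
  fixes Q :: "'k::comm_ring_1 tpoly set"
  assumes Q: "is_prime_ideal_in (ringR a n) Q" and minors_Q: "minors a n J \<subseteq> Q"
    and "J \<subseteq> {1..n}" "K \<subseteq> J" and LK: "L_ideal a n K \<subseteq> Q"
  shows "L_ideal a n J \<subseteq> Q \<or> (\<exists>l\<in>J - K. L_ideal a n (J - {l}) \<subseteq> Q)"
proof (rule disjCI)
  assume no_deletion: "\<not> (\<exists>l\<in>J - K. L_ideal a n (J - {l}) \<subseteq> Q)"
  have "finite (J - K)" using \<open>J \<subseteq> {1..n}\<close> finite_subset by blast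
  moreover have "L_ideal a n (K \<union> T) \<subseteq> Q" if "finite T" "T \<subseteq> J - K" for T
    using that
  proof (induction T rule: finite_subset_induct')
    case empty
    then show ?case using LK by simp
  next
    case (insert l T)
    then have "L_ideal a n (insert l (K \<union> T)) \<subseteq> Q \<or> L_ideal a n (J - {l}) \<subseteq> Q"
      using \<open>K \<subseteq> J\<close>
      by (intro L_ideal_insert_subset_or_L_ideal_Diff_subset[OF Q minors_Q \<open>J \<subseteq> {1..n}\<close>]) auto
    then show ?case using no_deletion insert.hyps(2) by auto
  qed
  ultimately have "L_ideal a n (K \<union> (J - K)) \<subseteq> Q" by blast
  then show "L_ideal a n J \<subseteq> Q" using \<open>K \<subseteq> J\<close> by (simp add: Un_absorb1)
qed

theorem lemma6p3:
  fixes a :: "nat \<Rightarrow> nat" and n :: nat and \<Delta> :: "nat set set"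
    and Q :: "'k::field tpoly set"
  assumes "finite \<Delta>" and "\<Delta> \<noteq> {}" and "\<forall>J\<in>\<Delta>. J \<subseteq> {1..n}"
    and "is_prime_ideal_in (ringR a n) Q"
    and "I_Delta a n \<Delta> \<subseteq> Q" and "L_ideal a n (\<Inter>\<Delta>) \<subseteq> Q"
  shows "\<forall>J\<in>\<Delta>. \<exists>J'\<in>\<Delta>. L_ideal a n (J \<inter> J') \<subseteq> Q"
proof
  fix J assume J: "J \<in> \<Delta>"
  have I: "is_ideal_in (ringR a n) Q" using assms(4) by (simp add: is_prime_ideal_in_def)
  have Jn: "J \<subseteq> {1..n}" using assms(3) J by blast
  have "minors a n J \<subseteq> Q"
    using assms(5) J unfolding I_Delta_def ideal_gen_subset_iff[OF I ringR_one] by blast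
  then consider "L_ideal a n J \<subseteq> Q" | l where "l \<in> J - \<Inter>\<Delta>" "L_ideal a n (J - {l}) \<subseteq> Q"
    using L_ideal_subset_or_L_ideal_Diff_subset[OF assms(4) _ Jn _ assms(6)] J by blast
  then show "\<exists>J'\<in>\<Delta>. L_ideal a n (J \<inter> J') \<subseteq> Q"
  proof cases
    case 1
    then show ?thesis using J by (metis Int_absorb)
  next
    case (2 l)
    then obtain J' where "J' \<in> \<Delta>" "l \<notin> J'" by blast
    then have "L_ideal a n (J \<inter> J') \<subseteq> Q"
      using L_ideal_subset_mono[OF I _ _ \<open>L_ideal a n (J - {l}) \<subseteq> Q\<close>] Jn by blast
    then show ?thesis using \<open>J' \<in> \<Delta>\<close> by blast
  qed
qed

end
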